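(* Let $\Omega\subset\mathbb{R}^2$ be a bounded domain with smooth boundary and $p\ge1$. There is $c=c(p,\Omega)>0$ such that for all $\varphi,\psi\in C^1(\overline\Omega)$ with $\varphi>0$, $\psi>0$ in $\overline\Omega$, $$\int_\Omega\varphi^{p+1}\psi\le c\left\{\int_\Omega\psi|\nabla\varphi|^2+\int_\Omega\frac{\varphi}{\psi}|\nabla\psi|^2+\int_\Omega\varphi\psi\right\}\cdot\int_\Omega\varphi^p+c\int_\Omega\psi|\nabla\varphi|^2.$$ *)

theory Defs
  imports "HOL-Analysis.Analysis"
begin

definition grad :: "(real^2 \<Rightarrow> real) \<Rightarrow> real^2 \<Rightarrow> real^2" where
  "grad f x = (\<chi> i. frechet_derivative f (at x) (axis i 1))"

definition smooth_real_fun :: "(real \<Rightarrow> real) \<Rightarrow> bool" where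
  "smooth_real_fun h \<longleftrightarrow> (\<forall>n t. ((deriv ^^ n) h) differentiable (at t))"

definition smooth_boundary :: "(real^2) set \<Rightarrow> bool" where
  "smooth_boundary \<Omega> \<longleftrightarrow>
    (\<forall>z\<in>frontier \<Omega>. \<exists>r>0. \<exists>(T :: real^2 \<Rightarrow> real^2) h. orthogonal_transformation T \<and> smooth_real_fun h \<and>
       \<Omega> \<inter> ball z r = {x \<in> ball z r. (T (x - z)) $ 2 < h ((T (x - z)) $ 1)})"

definition C1_closure :: "(real^2) set \<Rightarrow> (real^2 \<Rightarrow> real) \<Rightarrow> bool" where
  "C1_closure \<Omega> f \<longleftrightarrow> (\<forall>x\<in>\<Omega>. f differentiable (at x)) \<and> continuous_on (closure \<Omega>) f \<and>
     (\<exists>g. continuous_on (closure \<Omega>) g \<and> (\<forall>x\<in>\<Omega>. g x = grad f x))"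

end

theory Submission
  imports Defs
begin

text \<open>
  The heart of the matter is the Sobolev inequality \<open>\<integral>w\<^sup>2 \<le> K (\<integral>|\<nabla>w| + |w|)\<^sup>2\<close> on \<open>\<Omega>\<close>,
  i.e. the embedding of W^{1,1} into L^2 in the plane. Locally it is Gagliardo's argument: if
  \<open>|V|\<close> is bounded by the integrals of \<open>F\<^sub>1\<close> and of \<open>F\<^sub>2\<close> along the lines in two independent
  directions, then \<open>\<integral>V\<^sup>2 \<le> (\<integral>F\<^sub>1)(\<integral>F\<^sub>2)\<close> up to the Jacobian of the frame. For \<open>V = \<eta>w\<close>, where the
  cut-off \<open>\<eta>\<close> vanishes on the boundary of a small ball, such bounds follow from the fundamental
  theorem of calculus along rays that stay in \<open>\<Omega>\<close> until they leave the ball. Near a boundary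
  point \<open>\<Omega>\<close> lies below a Lipschitz graph, and two rays pointing downwards more steeply than the
  graph can fall do the job; compactness of the closure leaves finitely many balls.

  The lemma follows by applying the inequality to \<open>w = \<phi>\<^bsup>(p+1)/2\<^esup> \<psi>\<^bsup>1/2\<^esup>\<close>: each of the three
  terms bounding \<open>|\<nabla>w| + |w|\<close> is estimated by Cauchy-Schwarz, and
  \<open>\<integral>\<phi>\<^bsup>p-1\<^esup> \<le> |\<Omega>| + \<integral>\<phi>\<^bsup>p\<^esup>\<close> absorbs the one term without the factor \<open>\<integral>\<phi>\<^bsup>p\<^esup>\<close>.
\<close>

section \<open>Integration on the plane\<close>

lemma real2_eq_axis_sum: "x = x$1 *\<^sub>R axis 1 1 + x$2 *\<^sub>R axis 2 (1::real)"
  for x :: "real^2"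
  by (simp add: vec_eq_iff forall_2 axis_def)

lemma vector_2_eq_axis_sum: "(vector [a, b] :: real^2) = a *\<^sub>R axis 1 1 + b *\<^sub>R axis 2 1"
  using real2_eq_axis_sum[of "vector [a, b]"] by simp

lemma measurable_vector_2 [measurable]:
  "f \<in> borel_measurable M \<Longrightarrow> g \<in> borel_measurable M \<Longrightarrow>
    (\<lambda>x. vector [f x, g x] :: real^2) \<in> borel_measurable M"
  unfolding vector_2_eq_axis_sum by (intro borel_measurable_add borel_measurable_scaleR borel_measurable_const)

lemma prod_Basis_real2:
  fixes f :: "real^2 \<Rightarrow> 'a::comm_monoid_mult"
  shows "(\<Prod>b\<in>Basis. f b) = f (axis 1 1) * f (axis 2 1)"
proof -
  have Basis: "(Basis :: (real^2) set) = {axis 1 1, axis 2 1}"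
    by (auto simp: Basis_vec_def UNIV_2)
  have "axis (1::2) (1::real) \<noteq> axis 2 1"
    by (simp add: axis_eq_axis)
  then show ?thesis
    unfolding Basis by simp
qed

lemma lborel_real2_eq_distr_pair:
  "(lborel :: (real^2) measure) = distr (lborel \<Otimes>\<^sub>M lborel) borel (\<lambda>(a, b). vector [a, b])"
proof (rule lborel_eqI)
  fix l u :: "real^2"
  assume le: "\<And>b. b \<in> Basis \<Longrightarrow> l \<bullet> b \<le> u \<bullet> b"
  have "l$1 \<le> u$1" "l$2 \<le> u$2"
    using le[of "axis 1 1"] le[of "axis 2 1"] by (auto simp: Basis_vec_def inner_axis)
  moreover have "(\<lambda>(a, b). vector [a, b]) -` box l u \<inter> space (lborel \<Otimes>\<^sub>M lborel)
      = box (l$1) (u$1) \<times> box (l$2) (u$2)"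
    by (auto simp: mem_box_cart forall_2 space_pair_measure)
  ultimately show "emeasure (distr (lborel \<Otimes>\<^sub>M lborel) borel (\<lambda>(a, b). vector [a, b])) (box l u)
      = (\<Prod>b\<in>Basis. (u - l) \<bullet> b)"
    by (simp add: emeasure_distr lborel.emeasure_pair_measure_Times prod_Basis_real2 inner_axis
        ennreal_mult)
qed simp

lemma nn_integral_real2_iterated:
  fixes f :: "real^2 \<Rightarrow> ennreal"
  assumes [measurable]: "f \<in> borel_measurable borel"
  shows "(\<integral>\<^sup>+x. f x \<partial>lborel) = (\<integral>\<^sup>+a. \<integral>\<^sup>+b. f (vector [a, b]) \<partial>lborel \<partial>lborel)"
  by (subst lborel_real2_eq_distr_pair)
    (simp add: nn_integral_distr lborel.nn_integral_fst[symmetric] case_prod_beta)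

lemma lborel_eq_density_distr_linear:
  fixes g :: "(real, 'n::{finite,wellorder}) vec \<Rightarrow> (real, 'n) vec"
  assumes g: "linear g" and det: "det (matrix g) \<noteq> 0"
  shows "lborel = density (distr lborel borel g) (\<lambda>_. ennreal \<bar>det (matrix g)\<bar>)"
proof (rule lborel_eqI)
  obtain h where h: "linear h" and hg: "\<And>x. h (g x) = x" and gh: "\<And>x. g (h x) = x"
    using linear_injective_isomorphism[OF g] det_nz_iff_inj[OF g] det by auto
  have [measurable]: "g \<in> borel_measurable borel"
    using g by (simp add: borel_measurable_continuous_onI linear_continuous_on linear_linear)
  have "det (matrix g) * det (matrix h) = 1"
    using matrix_compose[OF h g] gh
    by (metis comp_apply det_I det_mul eq_id_iff matrix_id_mat_1)
  then have det_gh: "\<bar>det (matrix g)\<bar> * \<bar>det (matrix h)\<bar> = 1"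
    by (simp add: abs_mult[symmetric])
  fix l u :: "(real, 'n) vec"
  assume "\<And>b. b \<in> Basis \<Longrightarrow> l \<bullet> b \<le> u \<bullet> b"
  then have box: "measure lebesgue (box l u) = (\<Prod>b\<in>Basis. (u - l) \<bullet> b)"
    by (simp add: measure_lborel_box_eq inner_diff_left)
  have pre: "g -` box l u = h ` box l u"
    using gh hg by (auto simp: image_iff) metis
  have "h ` box l u \<in> sets borel"
    using pre[symmetric] g by (metis borel_open open_box open_vimage linear_continuous_on linear_linear)
  then have "emeasure lborel (g -` box l u) = emeasure lebesgue (h ` box l u)"
    by (simp add: pre)
  also have "\<dots> = ennreal (\<bar>det (matrix h)\<bar> * measure lebesgue (box l u))"
    using measure_linear_image[OF h, of "box l u"] measurable_linear_image[OF h, of "box l u"]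
    by (simp add: emeasure_eq_measure2)
  finally have e1: "emeasure lborel (g -` box l u) = ennreal (\<bar>det (matrix h)\<bar> * measure lebesgue (box l u))" .
  have "emeasure (density (distr lborel borel g) (\<lambda>_. ennreal \<bar>det (matrix g)\<bar>)) (box l u)
      = ennreal \<bar>det (matrix g)\<bar> * emeasure lborel (g -` box l u)"
    by (simp add: emeasure_density nn_integral_cmult_indicator emeasure_distr)
  also have "\<dots> = ennreal (\<bar>det (matrix g)\<bar> * \<bar>det (matrix h)\<bar> * measure lebesgue (box l u))"
    using e1 by (simp add: ennreal_mult mult.assoc)
  finally show "emeasure (density (distr lborel borel g) (\<lambda>_. ennreal \<bar>det (matrix g)\<bar>)) (box l u)
      = (\<Prod>b\<in>Basis. (u - l) \<bullet> b)"
    by (simp add: det_gh box)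
qed simp

lemma nn_integral_change_of_variables_linear:
  fixes g :: "(real, 'n::{finite,wellorder}) vec \<Rightarrow> (real, 'n) vec" and f :: "(real, 'n) vec \<Rightarrow> ennreal"
  assumes g: "linear g" and det: "det (matrix g) \<noteq> 0" and [measurable]: "f \<in> borel_measurable borel"
  shows "(\<integral>\<^sup>+x. f x \<partial>lborel) = ennreal \<bar>det (matrix g)\<bar> * (\<integral>\<^sup>+x. f (g x) \<partial>lborel)"
proof -
  have [measurable]: "g \<in> borel_measurable borel"
    using g by (simp add: borel_measurable_continuous_onI linear_continuous_on linear_linear)
  show ?thesis
    by (subst lborel_eq_density_distr_linear[OF g det])
      (simp add: nn_integral_density nn_integral_distr nn_integral_cmult)
qed

lemma borel_measurable_continuous_on_indicator_mult:
  fixes f :: "'a::topological_space \<Rightarrow> real"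
  assumes "S \<in> sets borel" "continuous_on S f"
  shows "(\<lambda>x. indicator S x * f x) \<in> borel_measurable borel"
  using borel_measurable_continuous_on_indicator[OF assms] by simp

lemma continuous_on_closure_integrable_on:
  fixes f :: "'a::euclidean_space \<Rightarrow> real"
  assumes "bounded \<Omega>" "open \<Omega>" "continuous_on (closure \<Omega>) f"
  shows "f integrable_on \<Omega>"
proof -
  have "set_integrable lborel (closure \<Omega>) f"
    unfolding set_integrable_def using assms
    by (intro borel_integrable_compact) (auto simp: compact_closure)
  then have "set_integrable lborel \<Omega> f"
    by (rule set_integrable_subset) (use assms closure_subset in auto)
  then show ?thesis
    by (rule set_borel_integral_eq_integral)
qed

lemma nn_integral_indicator_eq_integral:
  fixes f :: "'a::euclidean_space \<Rightarrow> real"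
  assumes "bounded \<Omega>" "open \<Omega>" "continuous_on (closure \<Omega>) f" "\<And>x. x \<in> \<Omega> \<Longrightarrow> 0 \<le> f x"
  shows "(\<integral>\<^sup>+x. ennreal (indicator \<Omega> x * f x) \<partial>lborel) = ennreal (integral \<Omega> f)"
  using nn_integral_has_integral_lebesgue[of \<Omega> f "integral \<Omega> f"] assms(4)
    continuous_on_closure_integrable_on[OF assms(1-3)] by (simp add: integrable_integral)

lemma integral_nonneg_of_nonneg:
  fixes f :: "'a::euclidean_space \<Rightarrow> real"
  shows "(\<And>x. x \<in> S \<Longrightarrow> 0 \<le> f x) \<Longrightarrow> 0 \<le> integral S f"
  by (cases "f integrable_on S") (simp_all add: integral_nonneg not_integrable_integral)

section \<open>Gagliardo's inequality for two directions\<close>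

definition frame_map :: "real^2 \<Rightarrow> real^2 \<Rightarrow> real^2 \<Rightarrow> real^2" where
  "frame_map d1 d2 x = x$1 *\<^sub>R d1 + x$2 *\<^sub>R d2"

lemma linear_frame_map: "linear (frame_map d1 d2)"
  by (intro linearI) (auto simp: frame_map_def algebra_simps)

lemma frame_map_vector_2 [simp]: "frame_map d1 d2 (vector [a, b]) = a *\<^sub>R d1 + b *\<^sub>R d2"
  by (simp add: frame_map_def)

lemma det_matrix_frame_map: "det (matrix (frame_map d1 d2)) = d1$1 * d2$2 - d2$1 * d1$2"
  by (simp add: det_2 matrix_def frame_map_def axis_def)

lemma frame_map_linear_image:
  "linear f \<Longrightarrow> frame_map (f d1) (f d2) = f \<circ> frame_map d1 d2"
  by (auto simp: frame_map_def linear_add linear_scale)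

lemma nn_integral_square_le_line_integrals:
  fixes V :: "real^2 \<Rightarrow> real" and F1 F2 :: "real^2 \<Rightarrow> ennreal"
  assumes [measurable]: "V \<in> borel_measurable borel" "F1 \<in> borel_measurable borel"
      "F2 \<in> borel_measurable borel"
    and bound1: "\<And>a b. ennreal \<bar>V (vector [a, b])\<bar> \<le> (\<integral>\<^sup>+s. F1 (vector [s, b]) \<partial>lborel)"
    and bound2: "\<And>a b. ennreal \<bar>V (vector [a, b])\<bar> \<le> (\<integral>\<^sup>+s. F2 (vector [a, s]) \<partial>lborel)"
  shows "(\<integral>\<^sup>+y. ennreal ((V y)\<^sup>2) \<partial>lborel) \<le> (\<integral>\<^sup>+y. F1 y \<partial>lborel) * (\<integral>\<^sup>+y. F2 y \<partial>lborel)"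
proof -
  define \<alpha> where "\<alpha> b = (\<integral>\<^sup>+s. F1 (vector [s, b]) \<partial>lborel)" for b
  define \<beta> where "\<beta> a = (\<integral>\<^sup>+s. F2 (vector [a, s]) \<partial>lborel)" for a
  have [measurable]: "\<alpha> \<in> borel_measurable lborel" "\<beta> \<in> borel_measurable lborel"
    unfolding \<alpha>_def \<beta>_def by (rule lborel.borel_measurable_nn_integral, measurable)+
  have \<alpha>: "(\<integral>\<^sup>+b. \<alpha> b \<partial>lborel) = (\<integral>\<^sup>+y. F1 y \<partial>lborel)"
    unfolding \<alpha>_def by (subst lborel_pair.Fubini') (simp_all add: nn_integral_real2_iterated)
  have \<beta>: "(\<integral>\<^sup>+a. \<beta> a \<partial>lborel) = (\<integral>\<^sup>+y. F2 y \<partial>lborel)"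
    unfolding \<beta>_def by (simp add: nn_integral_real2_iterated)
  have "(\<integral>\<^sup>+y. ennreal ((V y)\<^sup>2) \<partial>lborel)
      = (\<integral>\<^sup>+a. \<integral>\<^sup>+b. ennreal ((V (vector [a, b]))\<^sup>2) \<partial>lborel \<partial>lborel)"
    by (simp add: nn_integral_real2_iterated)
  \<comment> \<open>The two line bounds make \<open>V\<^sup>2\<close> at most a product of a function of \<open>a\<close> and a function of \<open>b\<close>.\<close>
  also have "\<dots> \<le> (\<integral>\<^sup>+a. \<integral>\<^sup>+b. \<beta> a * \<alpha> b \<partial>lborel \<partial>lborel)"
  proof (intro nn_integral_mono)
    fix a b
    have "ennreal ((V (vector [a, b]))\<^sup>2)
        = ennreal \<bar>V (vector [a, b])\<bar> * ennreal \<bar>V (vector [a, b])\<bar>"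
      by (simp add: ennreal_mult[symmetric] power2_eq_square abs_mult[symmetric])
    also have "\<dots> \<le> \<beta> a * \<alpha> b"
      unfolding \<alpha>_def \<beta>_def by (intro mult_mono bound1 bound2) auto
    finally show "ennreal ((V (vector [a, b]))\<^sup>2) \<le> \<beta> a * \<alpha> b" .
  qed
  also have "\<dots> = (\<integral>\<^sup>+a. \<beta> a \<partial>lborel) * (\<integral>\<^sup>+b. \<alpha> b \<partial>lborel)"
    by (simp add: nn_integral_cmult nn_integral_multc)
  finally show ?thesis
    unfolding \<alpha> \<beta> by (simp add: mult.commute)
qed

lemma gagliardo_two_directions:
  fixes V :: "real^2 \<Rightarrow> real" and F1 F2 :: "real^2 \<Rightarrow> ennreal"
  assumes [measurable]: "V \<in> borel_measurable borel" "F1 \<in> borel_measurable borel"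
      "F2 \<in> borel_measurable borel"
    and det: "det (matrix (frame_map d1 d2)) \<noteq> 0"
    and bound1: "\<And>y. ennreal \<bar>V y\<bar> \<le> (\<integral>\<^sup>+t. F1 (y + t *\<^sub>R d1) \<partial>lborel)"
    and bound2: "\<And>y. ennreal \<bar>V y\<bar> \<le> (\<integral>\<^sup>+t. F2 (y + t *\<^sub>R d2) \<partial>lborel)"
  shows "ennreal \<bar>det (matrix (frame_map d1 d2))\<bar> * (\<integral>\<^sup>+y. ennreal ((V y)\<^sup>2) \<partial>lborel)
           \<le> (\<integral>\<^sup>+y. F1 y \<partial>lborel) * (\<integral>\<^sup>+y. F2 y \<partial>lborel)"
proof -
  let ?g = "frame_map d1 d2"
  define D where "D = ennreal \<bar>det (matrix ?g)\<bar>"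
  have g: "?g \<in> borel_measurable borel"
    by (simp add: borel_measurable_continuous_onI linear_continuous_on linear_linear linear_frame_map)
  have meas: "(\<lambda>x. V (?g x)) \<in> borel_measurable borel" "(\<lambda>x. F1 (?g x)) \<in> borel_measurable borel"
    "(\<lambda>x. F2 (?g x)) \<in> borel_measurable borel"
    by (rule measurable_compose[OF g], measurable)+
  have change: "(\<integral>\<^sup>+y. f y \<partial>lborel) = D * (\<integral>\<^sup>+x. f (?g x) \<partial>lborel)"
    if "f \<in> borel_measurable borel" for f :: "real^2 \<Rightarrow> ennreal"
    unfolding D_def by (rule nn_integral_change_of_variables_linear[OF linear_frame_map det that])
  have "(\<integral>\<^sup>+x. ennreal ((V (?g x))\<^sup>2) \<partial>lborel)
      \<le> (\<integral>\<^sup>+x. F1 (?g x) \<partial>lborel) * (\<integral>\<^sup>+x. F2 (?g x) \<partial>lborel)"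
  proof (rule nn_integral_square_le_line_integrals)
    fix a b
    have [measurable]: "(\<lambda>s. F1 (s *\<^sub>R d1 + b *\<^sub>R d2)) \<in> borel_measurable borel"
      "(\<lambda>s. F2 (a *\<^sub>R d1 + s *\<^sub>R d2)) \<in> borel_measurable borel"
      by measurable
    have "ennreal \<bar>V (?g (vector [a, b]))\<bar> \<le> (\<integral>\<^sup>+t. F1 ((a + t) *\<^sub>R d1 + b *\<^sub>R d2) \<partial>lborel)"
      using bound1[of "a *\<^sub>R d1 + b *\<^sub>R d2"] by (simp add: algebra_simps)
    also have "\<dots> = (\<integral>\<^sup>+s. F1 (?g (vector [s, b])) \<partial>lborel)"
      using nn_integral_real_affine[of "\<lambda>s. F1 (s *\<^sub>R d1 + b *\<^sub>R d2)" 1 a] by simp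
    finally show "ennreal \<bar>V (?g (vector [a, b]))\<bar> \<le> (\<integral>\<^sup>+s. F1 (?g (vector [s, b])) \<partial>lborel)" .
    have "ennreal \<bar>V (?g (vector [a, b]))\<bar> \<le> (\<integral>\<^sup>+t. F2 (a *\<^sub>R d1 + (b + t) *\<^sub>R d2) \<partial>lborel)"
      using bound2[of "a *\<^sub>R d1 + b *\<^sub>R d2"] by (simp add: algebra_simps)
    also have "\<dots> = (\<integral>\<^sup>+s. F2 (?g (vector [a, s])) \<partial>lborel)"
      using nn_integral_real_affine[of "\<lambda>s. F2 (a *\<^sub>R d1 + s *\<^sub>R d2)" 1 b] by simp
    finally show "ennreal \<bar>V (?g (vector [a, b]))\<bar> \<le> (\<integral>\<^sup>+s. F2 (?g (vector [a, s])) \<partial>lborel)" .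
  qed (fact meas)+
  note ineq = this
  have "D * (\<integral>\<^sup>+y. ennreal ((V y)\<^sup>2) \<partial>lborel) = D * (D * (\<integral>\<^sup>+x. ennreal ((V (?g x))\<^sup>2) \<partial>lborel))"
    using change[of "\<lambda>y. ennreal ((V y)\<^sup>2)"] by simp
  also have "\<dots> \<le> D * (D * ((\<integral>\<^sup>+x. F1 (?g x) \<partial>lborel) * (\<integral>\<^sup>+x. F2 (?g x) \<partial>lborel)))"
    using ineq by (intro mult_left_mono) auto
  also have "\<dots> = (D * (\<integral>\<^sup>+x. F1 (?g x) \<partial>lborel)) * (D * (\<integral>\<^sup>+x. F2 (?g x) \<partial>lborel))"
    by (simp add: ac_simps)
  also have "\<dots> = (\<integral>\<^sup>+y. F1 y \<partial>lborel) * (\<integral>\<^sup>+y. F2 y \<partial>lborel)"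
    using change[of F1] change[of F2] by simp
  finally show ?thesis
    unfolding D_def .
qed

section \<open>Cut-off functions along rays\<close>

lemma ray_leaves_ball:
  fixes y z d :: "'a::real_normed_vector"
  assumes y: "y \<in> ball z \<rho>" and d: "d \<noteq> 0"
  obtains t1 where "t1 > 0" "dist z (y + t1 *\<^sub>R d) = \<rho>"
    "\<And>t. 0 \<le> t \<Longrightarrow> t \<le> t1 \<Longrightarrow> y + t *\<^sub>R d \<in> cball z \<rho>"
proof -
  define T where "T = (\<rho> + dist z y) / norm d"
  have "\<rho> > 0"
    using order_le_less_trans[OF zero_le_dist y[unfolded mem_ball]] .
  then have "T \<ge> 0"
    by (simp add: T_def)
  have "\<rho> + dist z y = norm (T *\<^sub>R d)"
    using d \<open>\<rho> > 0\<close> by (simp add: T_def)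
  also have "\<dots> \<le> dist z (y + T *\<^sub>R d) + dist z y"
    using norm_triangle_ineq4[of "z - y" "z - (y + T *\<^sub>R d)"] by (simp add: dist_norm add.commute)
  finally have "\<rho> \<le> dist z (y + T *\<^sub>R d)" by simp
  moreover have "continuous_on {0..T} (\<lambda>t. dist z (y + t *\<^sub>R d))"
    by (intro continuous_intros)
  ultimately obtain t1 where t1: "0 \<le> t1" "t1 \<le> T" "dist z (y + t1 *\<^sub>R d) = \<rho>"
    using IVT'[of "\<lambda>t. dist z (y + t *\<^sub>R d)" 0 \<rho> T] y \<open>T \<ge> 0\<close> by auto
  then have "t1 > 0"
    using y by (cases "t1 = 0") auto
  moreover have "y + t *\<^sub>R d \<in> cball z \<rho>" if "0 \<le> t" "t \<le> t1" for t
  proof -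
    have "y + t *\<^sub>R d = (1 - t / t1) *\<^sub>R y + (t / t1) *\<^sub>R (y + t1 *\<^sub>R d)"
      using \<open>t1 > 0\<close> by (simp add: algebra_simps)
    also have "\<dots> \<in> cball z \<rho>"
      using that y t1 \<open>t1 > 0\<close> by (intro convexD[OF convex_cball]) auto
    finally show ?thesis .
  qed
  ultimately show ?thesis
    using that t1 by blast
qed

lemma norm_le_integral_of_derivative_bound:
  fixes f :: "real \<Rightarrow> 'a::banach"
  assumes "a \<le> b"
    and f': "\<And>t. t \<in> {a..b} \<Longrightarrow> (f has_vector_derivative f' t) (at t within {a..b})"
    and "f b = 0"
    and bound: "\<And>t. t \<in> {a..b} \<Longrightarrow> norm (f' t) \<le> G t" and "G integrable_on {a..b}"
  shows "norm (f a) \<le> integral {a..b} G"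
proof -
  have "(f' has_integral (- f a)) {a..b}"
    using fundamental_theorem_of_calculus[OF \<open>a \<le> b\<close> f'] \<open>f b = 0\<close> by simp
  then show ?thesis
    using integral_norm_bound_integral[OF _ \<open>G integrable_on {a..b}\<close> bound]
    by (metis has_integral_integrable integral_unique norm_minus_cancel)
qed

text \<open>Outside the ball \<open>bump z \<rho>\<close> is positive again; it is only ever used multiplied by the
  indicator of the ball.\<close>

definition bump :: "'a::real_normed_vector \<Rightarrow> real \<Rightarrow> 'a \<Rightarrow> real" where
  "bump z \<rho> x = (\<rho>\<^sup>2 - (norm (x - z))\<^sup>2)\<^sup>2"

lemma continuous_on_bump [continuous_intros]: "continuous_on S (bump z \<rho>)"
  unfolding bump_def by (intro continuous_intros)

lemma bump_eq_0_iff_sphere: "\<rho> \<ge> 0 \<Longrightarrow> bump z \<rho> x = 0 \<longleftrightarrow> dist z x = \<rho>"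
  by (auto simp: bump_def dist_norm norm_minus_commute power2_eq_iff_nonneg)

lemma bump_ge_on_half_ball:
  assumes "x \<in> ball z (\<rho> / 2)"
  shows "(3 / 4 * \<rho>\<^sup>2)\<^sup>2 \<le> bump z \<rho> x"
proof -
  have "norm (x - z) < \<rho> / 2"
    using assms by (simp add: dist_norm norm_minus_commute)
  then have "(norm (x - z))\<^sup>2 \<le> (\<rho> / 2)\<^sup>2"
    by (intro power_mono) auto
  then show ?thesis
    unfolding bump_def by (intro power_mono) (auto simp: power_divide)
qed

lemma has_derivative_bump_mult:
  fixes w :: "'a::real_inner \<Rightarrow> real"
  assumes "(w has_derivative (\<lambda>h. Gw \<bullet> h)) (at x)"
  shows "((\<lambda>x. bump z \<rho> x * w x) has_derivative
      (\<lambda>h. (bump z \<rho> x *\<^sub>R Gw - (4 * (\<rho>\<^sup>2 - (norm (x - z))\<^sup>2) * w x) *\<^sub>R (x - z)) \<bullet> h)) (at x)"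
  unfolding bump_def power2_norm_eq_inner
  using assms
  by (auto intro!: derivative_eq_intros ext simp: inner_diff_left inner_diff_right inner_commute algebra_simps power2_eq_square)

lemma norm_grad_bump_mult_le:
  fixes x z Gw :: "'a::real_inner"
  assumes "x \<in> cball z \<rho>"
  shows "norm (bump z \<rho> x *\<^sub>R Gw - (4 * (\<rho>\<^sup>2 - (norm (x - z))\<^sup>2) * w) *\<^sub>R (x - z))
    \<le> (\<rho>^4 + 4 * \<rho>^3) * (norm Gw + \<bar>w\<bar>)"
proof -
  have n: "norm (x - z) \<le> \<rho>" "0 \<le> \<rho>"
    using assms by (auto simp: dist_norm norm_minus_commute intro: order_trans[OF norm_ge_zero])
  then have u: "0 \<le> \<rho>\<^sup>2 - (norm (x - z))\<^sup>2" "\<rho>\<^sup>2 - (norm (x - z))\<^sup>2 \<le> \<rho>\<^sup>2"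
    by (auto intro: power_mono)
  then have "bump z \<rho> x \<le> \<rho>^4"
    unfolding bump_def using power_mono[OF u(2), of 2] by (simp add: power_mult[symmetric])
  then have "norm (bump z \<rho> x *\<^sub>R Gw) \<le> \<rho>^4 * norm Gw"
    by (simp add: bump_def mult_right_mono)
  moreover have "norm ((4 * (\<rho>\<^sup>2 - (norm (x - z))\<^sup>2) * w) *\<^sub>R (x - z)) \<le> 4 * \<rho>^3 * \<bar>w\<bar>"
  proof -
    have "norm ((4 * (\<rho>\<^sup>2 - (norm (x - z))\<^sup>2) * w) *\<^sub>R (x - z))
        = 4 * (\<rho>\<^sup>2 - (norm (x - z))\<^sup>2) * \<bar>w\<bar> * norm (x - z)"
      using u by (simp add: abs_mult)
    also have "\<dots> \<le> 4 * \<rho>\<^sup>2 * \<bar>w\<bar> * \<rho>"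
      using u n by (intro mult_mono) auto
    finally show ?thesis
      by (simp add: power2_eq_square power3_eq_cube algebra_simps)
  qed
  moreover have "\<rho>^4 * norm Gw + 4 * \<rho>^3 * \<bar>w\<bar> \<le> (\<rho>^4 + 4 * \<rho>^3) * (norm Gw + \<bar>w\<bar>)"
    using n by (simp add: algebra_simps)
  ultimately show ?thesis
    by (smt (verit) norm_triangle_ineq4)
qed

lemma abs_le_integral_along_ray:
  fixes u :: "'a::real_inner \<Rightarrow> real" and Gu :: "'a \<Rightarrow> 'a"
  assumes "0 \<le> t1" and zero: "u (y + t1 *\<^sub>R d) = 0"
    and der: "\<And>t. t \<in> {0..t1} \<Longrightarrow> (u has_derivative (\<lambda>h. Gu (y + t *\<^sub>R d) \<bullet> h)) (at (y + t *\<^sub>R d))"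
    and bound: "\<And>t. t \<in> {0..t1} \<Longrightarrow> norm (Gu (y + t *\<^sub>R d)) \<le> G t"
    and cont: "continuous_on {0..t1} G"
  shows "\<bar>u y\<bar> \<le> integral {0..t1} (\<lambda>t. G t * norm d)"
proof -
  have "norm (u (y + 0 *\<^sub>R d)) \<le> integral {0..t1} (\<lambda>t. G t * norm d)"
  proof (rule norm_le_integral_of_derivative_bound[where f' = "\<lambda>t. Gu (y + t *\<^sub>R d) \<bullet> d"])
    fix t assume t: "t \<in> {0..t1}"
    have "((\<lambda>t. y + t *\<^sub>R d) has_derivative (\<lambda>s. s *\<^sub>R d)) (at t within {0..t1})"
      by (auto intro!: derivative_eq_intros)
    from has_derivative_compose[OF this der[OF t]]
    show "((\<lambda>t. u (y + t *\<^sub>R d)) has_vector_derivative Gu (y + t *\<^sub>R d) \<bullet> d) (at t within {0..t1})"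
      by (simp add: has_vector_derivative_def inner_scaleR_right mult.commute)
    show "norm (Gu (y + t *\<^sub>R d) \<bullet> d) \<le> G t * norm d"
      using order_trans[OF Cauchy_Schwarz_ineq2 mult_right_mono[OF bound[OF t] norm_ge_zero[of d]]]
      by simp
  qed (use assms in \<open>auto intro!: integrable_continuous_real continuous_intros\<close>)
  then show ?thesis
    by simp
qed

lemma bump_mult_ray_bound:
  fixes w :: "'a::euclidean_space \<Rightarrow> real" and Gw :: "'a \<Rightarrow> 'a"
  assumes y: "y \<in> ball z \<rho>" and d: "d \<noteq> 0"
    and ray: "\<And>t. 0 \<le> t \<Longrightarrow> y + t *\<^sub>R d \<in> cball z \<rho> \<Longrightarrow> y + t *\<^sub>R d \<in> \<Omega>"
    and der: "\<And>x. x \<in> \<Omega> \<Longrightarrow> (w has_derivative (\<lambda>h. Gw x \<bullet> h)) (at x)"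
    and cont: "continuous_on \<Omega> Gw"
  shows "ennreal \<bar>bump z \<rho> y * w y\<bar> \<le> (\<integral>\<^sup>+t. ennreal ((\<rho>^4 + 4 * \<rho>^3) * norm d *
           (indicator \<Omega> (y + t *\<^sub>R d) * (norm (Gw (y + t *\<^sub>R d)) + \<bar>w (y + t *\<^sub>R d)\<bar>))) \<partial>lborel)"
proof -
  obtain t1 where "t1 > 0" and t1: "dist z (y + t1 *\<^sub>R d) = \<rho>"
    and seg: "\<And>t. 0 \<le> t \<Longrightarrow> t \<le> t1 \<Longrightarrow> y + t *\<^sub>R d \<in> cball z \<rho>"
    using ray_leaves_ball[OF y d] by blast
  define M where "M = \<rho>^4 + 4 * \<rho>^3"
  define G where "G t = M * (norm (Gw (y + t *\<^sub>R d)) + \<bar>w (y + t *\<^sub>R d)\<bar>)" for t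
  have on_ray: "y + t *\<^sub>R d \<in> \<Omega> \<inter> cball z \<rho>" if "t \<in> {0..t1}" for t
    using seg ray that by auto
  have "\<rho> \<ge> 0"
    using t1 zero_le_dist[of z "y + t1 *\<^sub>R d"] by linarith
  then have "M \<ge> 0"
    by (simp add: M_def)
  have ray_cont: "continuous_on {0..t1} (\<lambda>t. y + t *\<^sub>R d)"
    by (intro continuous_intros)
  have "continuous_on \<Omega> w"
    using der has_derivative_continuous continuous_at_imp_continuous_on by blast
  then have "continuous_on {0..t1} (\<lambda>t. w (y + t *\<^sub>R d))" "continuous_on {0..t1} (\<lambda>t. Gw (y + t *\<^sub>R d))"
    using on_ray by (auto intro!: continuous_on_compose2[OF _ ray_cont] cont)
  then have "continuous_on {0..t1} G"
    unfolding G_def by (intro continuous_intros)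
  moreover have "\<bar>bump z \<rho> y * w y\<bar> \<le> integral {0..t1} (\<lambda>t. G t * norm d)"
  proof (rule abs_le_integral_along_ray[OF _ _ has_derivative_bump_mult[OF der]])
    show "0 \<le> t1"
      using \<open>t1 > 0\<close> by simp
    show "bump z \<rho> (y + t1 *\<^sub>R d) * w (y + t1 *\<^sub>R d) = 0"
      using t1 \<open>\<rho> \<ge> 0\<close> by (simp add: bump_eq_0_iff_sphere)
    show "continuous_on {0..t1} G"
      by fact
  next
    fix t assume "t \<in> {0..t1}"
    then show "y + t *\<^sub>R d \<in> \<Omega>"
      using on_ray by blast
    show "norm (bump z \<rho> (y + t *\<^sub>R d) *\<^sub>R Gw (y + t *\<^sub>R d)
        - (4 * (\<rho>\<^sup>2 - (norm (y + t *\<^sub>R d - z))\<^sup>2) * w (y + t *\<^sub>R d)) *\<^sub>R (y + t *\<^sub>R d - z)) \<le> G t"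
      unfolding G_def M_def using on_ray[OF \<open>t \<in> {0..t1}\<close>] by (intro norm_grad_bump_mult_le) blast
  qed
  ultimately have "ennreal \<bar>bump z \<rho> y * w y\<bar> \<le> (\<integral>\<^sup>+t. ennreal (indicator {0..t1} t * (G t * norm d)) \<partial>lborel)"
    using nn_integral_has_integral_lebesgue[OF _ integrable_integral, of "{0..t1}" "\<lambda>t. G t * norm d"] \<open>M \<ge> 0\<close>
    by (simp add: G_def integrable_continuous_real continuous_intros)
  also have "\<dots> \<le> (\<integral>\<^sup>+t. ennreal (M * norm d *
           (indicator \<Omega> (y + t *\<^sub>R d) * (norm (Gw (y + t *\<^sub>R d)) + \<bar>w (y + t *\<^sub>R d)\<bar>))) \<partial>lborel)"
    using on_ray \<open>M \<ge> 0\<close> by (intro nn_integral_mono ennreal_leI) (auto simp: G_def indicator_def)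
  finally show ?thesis
    unfolding M_def .
qed

section \<open>Ray charts of a domain with smooth boundary\<close>

definition rays_stay_in :: "'a::real_normed_vector set \<Rightarrow> 'a \<Rightarrow> real \<Rightarrow> 'a \<Rightarrow> bool" where
  "rays_stay_in \<Omega> z \<rho> d \<longleftrightarrow>
    (\<forall>y\<in>\<Omega> \<inter> ball z \<rho>. \<forall>t\<ge>0. y + t *\<^sub>R d \<in> cball z \<rho> \<longrightarrow> y + t *\<^sub>R d \<in> \<Omega>)"

definition ray_chart :: "(real^2) set \<Rightarrow> real^2 \<Rightarrow> real \<Rightarrow> real^2 \<Rightarrow> real^2 \<Rightarrow> bool" where
  "ray_chart \<Omega> z \<rho> d1 d2 \<longleftrightarrow> \<rho> > 0 \<and> det (matrix (frame_map d1 d2)) \<noteq> 0 \<and>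
    rays_stay_in \<Omega> z \<rho> d1 \<and> rays_stay_in \<Omega> z \<rho> d2"

lemma ray_chart_imp_nonzero:
  assumes "ray_chart \<Omega> z \<rho> d1 d2"
  shows "d1 \<noteq> 0" "d2 \<noteq> 0"
  using assms by (auto simp: ray_chart_def det_matrix_frame_map)

lemma ray_chart_interior:
  assumes "\<rho> > 0" "cball z \<rho> \<subseteq> \<Omega>"
  shows "ray_chart \<Omega> z \<rho> (axis 1 1) (axis 2 1)"
  using assms by (auto simp: ray_chart_def rays_stay_in_def det_matrix_frame_map axis_def)

lemma smooth_real_fun_lipschitz_on:
  assumes "smooth_real_fun h"
  obtains L where "L-lipschitz_on {a..b} h"
proof -
  have deriv: "(h has_real_derivative deriv h t) (at t)" for t
    using assms DERIV_deriv_iff_real_differentiable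
    unfolding smooth_real_fun_def by (metis funpow_0)
  have cont: "continuous_on {a..b} (deriv h)"
    using assms unfolding smooth_real_fun_def
    by (metis One_nat_def continuous_at_imp_continuous_on differentiable_imp_continuous_within
        funpow.simps(2) funpow_0 o_apply)
  obtain B where B: "\<forall>t\<in>{a..b}. \<bar>deriv h t\<bar> \<le> B"
    using compact_imp_bounded[OF compact_continuous_image[OF cont compact_Icc]]
    unfolding bounded_iff by auto
  have "(max B 0)-lipschitz_on {a..b} h"
  proof (rule lipschitz_onI)
    fix x y assume xy: "x \<in> {a..b}" "y \<in> {a..b}"
    have "norm (h x - h y) \<le> max B 0 * norm (x - y)"
    proof (rule field_differentiable_bound[OF convex_real_interval(5)])
      show "(h has_field_derivative deriv h t) (at t within {a..b})" for t
        using deriv by (rule has_field_derivative_at_within)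
      show "norm (deriv h t) \<le> max B 0" if "t \<in> {a..b}" for t
        using B that by (simp add: le_max_iff_disj)
    qed (use xy in auto)
    then show "dist (h x) (h y) \<le> max B 0 * dist x y"
      by (simp add: dist_norm)
  qed simp
  then show ?thesis ..
qed

lemma rays_stay_below_lipschitz_graph:
  fixes T :: "real^2 \<Rightarrow> real^2"
  assumes T: "orthogonal_transformation T" and L: "L-lipschitz_on {-r..r} h"
    and eq: "\<Omega> \<inter> ball z r = {x \<in> ball z r. T (x - z) $ 2 < h (T (x - z) $ 1)}"
    and "\<rho> < r" and steep: "T d $ 2 \<le> - L * \<bar>T d $ 1\<bar>"
  shows "rays_stay_in \<Omega> z \<rho> d"
  unfolding rays_stay_in_def
proof (intro ballI allI impI)
  fix y t
  assume y: "y \<in> \<Omega> \<inter> ball z \<rho>" and "0 \<le> t" and yt: "y + t *\<^sub>R d \<in> cball z \<rho>"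
  define y' where "y' = T (y - z)"
  define q where "q = y' + t *\<^sub>R T d"
  have lin: "linear T"
    using T by (rule orthogonal_transformation_linear)
  have Tq: "T (y + t *\<^sub>R d - z) = q"
    unfolding q_def y'_def linear_scale[OF lin, symmetric] linear_add[OF lin, symmetric]
    by (simp add: algebra_simps)
  have "y \<in> ball z r" "y + t *\<^sub>R d \<in> ball z r"
    using y yt \<open>\<rho> < r\<close> by auto
  moreover have "norm y' = norm (y - z)" "norm q = norm (y + t *\<^sub>R d - z)"
    unfolding y'_def Tq[symmetric] by (simp_all only: orthogonal_transformation_norm[OF T])
  ultimately have "norm y' < r" "norm q < r"
    by (simp_all add: dist_norm norm_minus_commute)
  then have r: "y' $ 1 \<in> {-r..r}" "q $ 1 \<in> {-r..r}"
    using component_le_norm_cart[of y' 1] component_le_norm_cart[of q 1] by auto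
  have "y \<in> \<Omega> \<inter> ball z r"
    using y \<open>y \<in> ball z r\<close> by blast
  then have "y' $ 2 < h (y' $ 1)"
    unfolding eq y'_def by simp
  moreover have "h (y' $ 1) - h (q $ 1) \<le> L * (t * \<bar>T d $ 1\<bar>)"
  proof -
    have "h (y' $ 1) - h (q $ 1) \<le> dist (h (y' $ 1)) (h (q $ 1))"
      by (simp add: dist_real_def)
    also have "\<dots> \<le> L * dist (y' $ 1) (q $ 1)"
      using lipschitz_onD[OF L r] .
    also have "dist (y' $ 1) (q $ 1) = t * \<bar>T d $ 1\<bar>"
      using \<open>0 \<le> t\<close> by (simp add: q_def dist_real_def abs_mult)
    finally show ?thesis .
  qed
  moreover have "t * T d $ 2 \<le> - (L * (t * \<bar>T d $ 1\<bar>))"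
    using mult_left_mono[OF steep \<open>0 \<le> t\<close>] by (simp add: algebra_simps)
  ultimately have "q $ 2 < h (q $ 1)"
    by (simp add: q_def)
  with Tq \<open>y + t *\<^sub>R d \<in> ball z r\<close> have "y + t *\<^sub>R d \<in> \<Omega> \<inter> ball z r"
    unfolding eq by simp
  then show "y + t *\<^sub>R d \<in> \<Omega>" by blast
qed

lemma ray_chart_below_graph:
  fixes T :: "real^2 \<Rightarrow> real^2"
  assumes T: "orthogonal_transformation T" and L: "L-lipschitz_on {-r..r} h" and "r > 0"
    and eq: "\<Omega> \<inter> ball z r = {x \<in> ball z r. T (x - z) $ 2 < h (T (x - z) $ 1)}"
  shows "ray_chart \<Omega> z (r / 2) (inv T (vector [1, - (L + 1)])) (inv T (vector [- 1, - (L + 1)]))"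
proof -
  \<comment> \<open>Both directions fall with slope \<open>L + 1\<close>, faster than the graph of \<open>h\<close> can.\<close>
  define e1 where "e1 = (vector [1, - (L + 1)] :: real^2)"
  define e2 where "e2 = (vector [- 1, - (L + 1)] :: real^2)"
  have "L \<ge> 0"
    using L by (rule lipschitz_on_nonneg)
  have Te: "T (inv T e) = e" for e
    using orthogonal_transformation_surj[OF T] by (simp add: surj_f_inv_f)
  have lin: "linear T" "linear (frame_map (inv T e1) (inv T e2))"
    using T orthogonal_transformation_linear linear_frame_map by blast+
  have "det (matrix T) * det (matrix (frame_map (inv T e1) (inv T e2))) = det (matrix (frame_map e1 e2))"
    using frame_map_linear_image[OF lin(1), of "inv T e1" "inv T e2"]
    by (simp add: Te det_mul matrix_compose[OF lin(2,1)])
  also have "\<dots> = - 2 * (L + 1)"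
    by (simp add: det_matrix_frame_map e1_def e2_def)
  finally have "det (matrix (frame_map (inv T e1) (inv T e2))) \<noteq> 0"
    using \<open>L \<ge> 0\<close> by auto
  moreover have "rays_stay_in \<Omega> z (r / 2) (inv T e)" if "e \<in> {e1, e2}" for e
    using that \<open>r > 0\<close> \<open>L \<ge> 0\<close>
    by (intro rays_stay_below_lipschitz_graph[OF T L eq]) (auto simp: Te e1_def e2_def)
  ultimately show ?thesis
    using \<open>r > 0\<close> by (simp add: ray_chart_def e1_def e2_def)
qed

lemma ray_chart_exists:
  assumes "open \<Omega>" "smooth_boundary \<Omega>" "x \<in> closure \<Omega>"
  shows "\<exists>\<rho> d1 d2. ray_chart \<Omega> x \<rho> d1 d2"
proof (cases "x \<in> \<Omega>")
  case True
  then obtain e where "e > 0" "ball x e \<subseteq> \<Omega>"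
    using \<open>open \<Omega>\<close> open_contains_ball by blast
  then have "ray_chart \<Omega> x (e / 2) (axis 1 1) (axis 2 1)"
    by (intro ray_chart_interior) (auto simp: subset_eq)
  then show ?thesis by blast
next
  case False
  then have "x \<in> frontier \<Omega>"
    using assms by (simp add: frontier_def interior_open)
  then obtain r and T :: "real^2 \<Rightarrow> real^2" and h where r: "r > 0"
    and T: "orthogonal_transformation T" and h: "smooth_real_fun h"
    and eq: "\<Omega> \<inter> ball x r = {y \<in> ball x r. T (y - x) $ 2 < h (T (y - x) $ 1)}"
    using \<open>smooth_boundary \<Omega>\<close> unfolding smooth_boundary_def by blast
  obtain L where "L-lipschitz_on {-r..r} h"
    using smooth_real_fun_lipschitz_on[OF h] .
  from ray_chart_below_graph[OF T this r eq] show ?thesis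
    by blast
qed

lemma finite_ray_chart_cover:
  assumes "bounded \<Omega>" "open \<Omega>" "smooth_boundary \<Omega>"
  obtains Z \<rho> d1 d2 where "finite Z" "\<And>z. z \<in> Z \<Longrightarrow> ray_chart \<Omega> z (\<rho> z) (d1 z) (d2 z)"
    "\<Omega> \<subseteq> (\<Union>z\<in>Z. ball z (\<rho> z / 2))"
proof -
  have "\<forall>x\<in>closure \<Omega>. \<exists>\<rho> d1 d2. ray_chart \<Omega> x \<rho> d1 d2"
    using ray_chart_exists[OF assms(2,3)] by blast
  then obtain \<rho> d1 d2 where chart: "\<And>x. x \<in> closure \<Omega> \<Longrightarrow> ray_chart \<Omega> x (\<rho> x) (d1 x) (d2 x)"
    by (metis (no_types))
  have "closure \<Omega> \<subseteq> (\<Union>x\<in>closure \<Omega>. ball x (\<rho> x / 2))"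
  proof
    fix x assume "x \<in> closure \<Omega>"
    then have "\<rho> x > 0"
      using chart ray_chart_def by blast
    with \<open>x \<in> closure \<Omega>\<close> show "x \<in> (\<Union>x\<in>closure \<Omega>. ball x (\<rho> x / 2))"
      by force
  qed
  moreover have "compact (closure \<Omega>)"
    using assms(1) by (simp add: compact_closure)
  ultimately obtain Z where "Z \<subseteq> closure \<Omega>" "finite Z" "closure \<Omega> \<subseteq> (\<Union>z\<in>Z. ball z (\<rho> z / 2))"
    using compactE_image[of "closure \<Omega>" "closure \<Omega>" "\<lambda>x. ball x (\<rho> x / 2)"] by blast
  then show ?thesis
    using that[of Z \<rho> d1 d2] chart closure_subset by blast
qed

section \<open>The Sobolev inequality\<close>

lemma ray_chart_L2_estimate:
  fixes w :: "real^2 \<Rightarrow> real" and Gw :: "real^2 \<Rightarrow> real^2"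
  assumes "open \<Omega>" and chart: "ray_chart \<Omega> z \<rho> d1 d2"
    and der: "\<And>x. x \<in> \<Omega> \<Longrightarrow> (w has_derivative (\<lambda>h. Gw x \<bullet> h)) (at x)"
    and cont: "continuous_on \<Omega> Gw"
  shows "(\<integral>\<^sup>+x. ennreal ((indicator (\<Omega> \<inter> ball z \<rho>) x * (bump z \<rho> x * w x))\<^sup>2) \<partial>lborel)
    \<le> ennreal ((\<rho>^4 + 4 * \<rho>^3)\<^sup>2 * norm d1 * norm d2 / \<bar>det (matrix (frame_map d1 d2))\<bar>)
      * (\<integral>\<^sup>+x. ennreal (indicator \<Omega> x * (norm (Gw x) + \<bar>w x\<bar>)) \<partial>lborel)\<^sup>2"
proof -
  define M where "M = \<rho>^4 + 4 * \<rho>^3"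
  define D where "D = \<bar>det (matrix (frame_map d1 d2))\<bar>"
  define I where "I = (\<integral>\<^sup>+x. ennreal (indicator \<Omega> x * (norm (Gw x) + \<bar>w x\<bar>)) \<partial>lborel)"
  define V where "V x = indicator (\<Omega> \<inter> ball z \<rho>) x * (bump z \<rho> x * w x)" for x
  define F where "F (d :: real^2) x = ennreal (M * norm d * (indicator \<Omega> x * (norm (Gw x) + \<bar>w x\<bar>)))" for d x
  have "\<rho> > 0" "D > 0"
    using chart by (auto simp: ray_chart_def D_def)
  then have "M \<ge> 0"
    by (simp add: M_def)
  have "continuous_on \<Omega> w"
    using der has_derivative_continuous continuous_at_imp_continuous_on by blast
  then have [measurable]: "V \<in> borel_measurable borel"
      "(\<lambda>x. indicator \<Omega> x * (norm (Gw x) + \<bar>w x\<bar>)) \<in> borel_measurable borel"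
    unfolding V_def using \<open>open \<Omega>\<close> cont
    by (auto intro!: borel_measurable_continuous_on_indicator_mult continuous_intros
        intro: continuous_on_subset)
  have ray_bound: "ennreal \<bar>V y\<bar> \<le> (\<integral>\<^sup>+t. F d (y + t *\<^sub>R d) \<partial>lborel)"
    if "d \<in> {d1, d2}" for d y
  proof (cases "y \<in> \<Omega> \<inter> ball z \<rho>")
    case True
    have "d \<noteq> 0" "rays_stay_in \<Omega> z \<rho> d"
      using that chart ray_chart_imp_nonzero[OF chart] by (auto simp: ray_chart_def)
    then show ?thesis
      using True unfolding V_def F_def M_def rays_stay_in_def
      by (intro order_trans[OF _ bump_mult_ray_bound[OF _ _ _ der cont]]) auto
  qed (simp add: V_def)
  have F: "(\<integral>\<^sup>+x. F d x \<partial>lborel) = ennreal (M * norm d) * I" for d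
    unfolding F_def I_def ennreal_mult'[OF mult_nonneg_nonneg[OF \<open>M \<ge> 0\<close> norm_ge_zero]]
    by (rule nn_integral_cmult) measurable
  have "ennreal D * (\<integral>\<^sup>+x. ennreal ((V x)\<^sup>2) \<partial>lborel)
      \<le> (\<integral>\<^sup>+x. F d1 x \<partial>lborel) * (\<integral>\<^sup>+x. F d2 x \<partial>lborel)"
    unfolding D_def using chart ray_bound
    by (intro gagliardo_two_directions) (auto simp: ray_chart_def F_def)
  also have "\<dots> = ennreal (M\<^sup>2 * norm d1 * norm d2) * I\<^sup>2"
    unfolding F using \<open>M \<ge> 0\<close>
    by (simp add: ennreal_mult[symmetric] power2_eq_square ac_simps)
  finally have "ennreal (1 / D) * (ennreal D * (\<integral>\<^sup>+x. ennreal ((V x)\<^sup>2) \<partial>lborel))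
      \<le> ennreal (1 / D) * (ennreal (M\<^sup>2 * norm d1 * norm d2) * I\<^sup>2)"
    by (rule mult_left_mono) simp
  then show ?thesis
    using \<open>D > 0\<close> unfolding V_def M_def D_def I_def
    by (simp add: mult.assoc[symmetric] ennreal_mult[symmetric] del: ennreal_mult')
qed

lemma square_le_bump_mult_square:
  assumes "x \<in> ball z (\<rho> / 2)"
  shows "(3 / 4 * \<rho>\<^sup>2)^4 * w\<^sup>2 \<le> (bump z \<rho> x * w)\<^sup>2"
proof -
  have "((3 / 4 * \<rho>\<^sup>2)\<^sup>2)\<^sup>2 \<le> (bump z \<rho> x)\<^sup>2"
    using bump_ge_on_half_ball[OF assms] by (intro power_mono) auto
  then show ?thesis
    by (simp add: power_mult_distrib mult_right_mono flip: power_mult)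
qed

lemma ray_chart_half_ball_estimate:
  fixes w :: "real^2 \<Rightarrow> real" and Gw :: "real^2 \<Rightarrow> real^2"
  assumes "open \<Omega>" and chart: "ray_chart \<Omega> z \<rho> d1 d2"
    and der: "\<And>x. x \<in> \<Omega> \<Longrightarrow> (w has_derivative (\<lambda>h. Gw x \<bullet> h)) (at x)"
    and cont: "continuous_on \<Omega> Gw"
  shows "(\<integral>\<^sup>+x. ennreal (indicator (\<Omega> \<inter> ball z (\<rho> / 2)) x * (w x)\<^sup>2) \<partial>lborel)
    \<le> ennreal ((\<rho>^4 + 4 * \<rho>^3)\<^sup>2 * norm d1 * norm d2 / \<bar>det (matrix (frame_map d1 d2))\<bar>
        / (3 / 4 * \<rho>\<^sup>2)^4)
      * (\<integral>\<^sup>+x. ennreal (indicator \<Omega> x * (norm (Gw x) + \<bar>w x\<bar>)) \<partial>lborel)\<^sup>2"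
proof -
  define b where "b = (3 / 4 * \<rho>\<^sup>2)^4"
  define C where "C = (\<rho>^4 + 4 * \<rho>^3)\<^sup>2 * norm d1 * norm d2 / \<bar>det (matrix (frame_map d1 d2))\<bar>"
  define I where "I = (\<integral>\<^sup>+x. ennreal (indicator \<Omega> x * (norm (Gw x) + \<bar>w x\<bar>)) \<partial>lborel)"
  define V where "V x = indicator (\<Omega> \<inter> ball z \<rho>) x * (bump z \<rho> x * w x)" for x
  have "\<rho> > 0"
    using chart by (simp add: ray_chart_def)
  then have "b > 0"
    by (simp add: b_def)
  have "continuous_on \<Omega> w"
    using der has_derivative_continuous continuous_at_imp_continuous_on by blast
  then have [measurable]: "V \<in> borel_measurable borel"
    unfolding V_def using \<open>open \<Omega>\<close>
    by (auto intro!: borel_measurable_continuous_on_indicator_mult continuous_intros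
        intro: continuous_on_subset)
  have "indicator (\<Omega> \<inter> ball z (\<rho> / 2)) x * (w x)\<^sup>2 \<le> 1 / b * (V x)\<^sup>2" for x
  proof (cases "x \<in> \<Omega> \<inter> ball z (\<rho> / 2)")
    case True
    then have "x \<in> \<Omega> \<inter> ball z \<rho>"
      using \<open>\<rho> > 0\<close> by auto
    then show ?thesis
      using square_le_bump_mult_square[of x z \<rho> "w x"] True \<open>b > 0\<close>
      by (simp add: V_def b_def field_simps)
  qed (use \<open>b > 0\<close> in simp)
  then have "(\<integral>\<^sup>+x. ennreal (indicator (\<Omega> \<inter> ball z (\<rho> / 2)) x * (w x)\<^sup>2) \<partial>lborel)
      \<le> (\<integral>\<^sup>+x. ennreal (1 / b) * ennreal ((V x)\<^sup>2) \<partial>lborel)"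
    using \<open>b > 0\<close> by (intro nn_integral_mono) (simp add: ennreal_mult[symmetric] ennreal_leI)
  also have "\<dots> = ennreal (1 / b) * (\<integral>\<^sup>+x. ennreal ((V x)\<^sup>2) \<partial>lborel)"
    by (rule nn_integral_cmult) measurable
  also have "\<dots> \<le> ennreal (1 / b) * (ennreal C * I\<^sup>2)"
    unfolding V_def C_def I_def
    by (intro mult_left_mono ray_chart_L2_estimate[OF \<open>open \<Omega>\<close> chart der cont] zero_le)
  also have "\<dots> = ennreal (C / b) * I\<^sup>2"
  proof -
    have "ennreal (1 / b) * ennreal C = ennreal (C / b)"
      using \<open>b > 0\<close> by (simp add: ennreal_mult'[symmetric])
    then show ?thesis
      by (simp add: mult.assoc[symmetric])
  qed
  finally show ?thesis
    unfolding C_def b_def I_def .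
qed

lemma sobolev_inequality_nn:
  fixes \<Omega> :: "(real^2) set"
  assumes "bounded \<Omega>" "open \<Omega>" "smooth_boundary \<Omega>"
  obtains K where "K > 0"
    "\<And>w Gw. (\<And>x. x \<in> \<Omega> \<Longrightarrow> (w has_derivative (\<lambda>h. Gw x \<bullet> h)) (at x)) \<Longrightarrow> continuous_on \<Omega> Gw \<Longrightarrow>
      (\<integral>\<^sup>+x. ennreal (indicator \<Omega> x * (w x)\<^sup>2) \<partial>lborel)
        \<le> ennreal K * (\<integral>\<^sup>+x. ennreal (indicator \<Omega> x * (norm (Gw x) + \<bar>w x\<bar>)) \<partial>lborel)\<^sup>2"
proof -
  obtain Z \<rho> d1 d2 where "finite Z" and chart: "\<And>z. z \<in> Z \<Longrightarrow> ray_chart \<Omega> z (\<rho> z) (d1 z) (d2 z)"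
    and cover: "\<Omega> \<subseteq> (\<Union>z\<in>Z. ball z (\<rho> z / 2))"
    using finite_ray_chart_cover[OF assms] by blast
  define C where "C z = ((\<rho> z)^4 + 4 * (\<rho> z)^3)\<^sup>2 * norm (d1 z) * norm (d2 z)
    / \<bar>det (matrix (frame_map (d1 z) (d2 z)))\<bar> / (3 / 4 * (\<rho> z)\<^sup>2)^4" for z
  have C: "C z \<ge> 0" for z
    by (simp add: C_def)
  show ?thesis
  proof
    show "(\<Sum>z\<in>Z. C z) + 1 > 0"
      using C by (simp add: add_nonneg_pos sum_nonneg)
  next
    fix w :: "real^2 \<Rightarrow> real" and Gw
    assume der: "\<And>x. x \<in> \<Omega> \<Longrightarrow> (w has_derivative (\<lambda>h. Gw x \<bullet> h)) (at x)"
      and cont: "continuous_on \<Omega> Gw"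
    define I where "I = (\<integral>\<^sup>+x. ennreal (indicator \<Omega> x * (norm (Gw x) + \<bar>w x\<bar>)) \<partial>lborel)"
    define W where "W z x = ennreal (indicator (\<Omega> \<inter> ball z (\<rho> z / 2)) x * (w x)\<^sup>2)" for z x
    have "continuous_on \<Omega> w"
      using der has_derivative_continuous continuous_at_imp_continuous_on by blast
    then have meas: "W z \<in> borel_measurable borel" for z
      unfolding W_def using \<open>open \<Omega>\<close>
      by (auto intro!: measurable_compose[OF _ measurable_ennreal]
          borel_measurable_continuous_on_indicator_mult continuous_intros intro: continuous_on_subset)
    have "ennreal (indicator \<Omega> x * (w x)\<^sup>2) \<le> (\<Sum>z\<in>Z. W z x)" for x
    proof (cases "x \<in> \<Omega>")
      case True
      then obtain z where "z \<in> Z" "x \<in> ball z (\<rho> z / 2)"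
        using cover by blast
      then have "ennreal (indicator \<Omega> x * (w x)\<^sup>2) = W z x"
        using True by (simp add: W_def)
      also have "\<dots> \<le> (\<Sum>z\<in>Z. W z x)"
        by (rule member_le_sum) (use \<open>z \<in> Z\<close> \<open>finite Z\<close> in auto)
      finally show ?thesis .
    qed simp
    then have "(\<integral>\<^sup>+x. ennreal (indicator \<Omega> x * (w x)\<^sup>2) \<partial>lborel) \<le> (\<integral>\<^sup>+x. (\<Sum>z\<in>Z. W z x) \<partial>lborel)"
      by (rule nn_integral_mono)
    also have "\<dots> = (\<Sum>z\<in>Z. \<integral>\<^sup>+x. W z x \<partial>lborel)"
      using meas by (simp add: nn_integral_sum)
    also have "\<dots> \<le> (\<Sum>z\<in>Z. ennreal (C z) * I\<^sup>2)"
      unfolding W_def C_def I_def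
      by (intro sum_mono ray_chart_half_ball_estimate[OF \<open>open \<Omega>\<close> chart der cont])
    also have "\<dots> \<le> ennreal ((\<Sum>z\<in>Z. C z) + 1) * I\<^sup>2"
      using C by (simp add: sum_distrib_right[symmetric] mult_right_mono ennreal_leI)
    finally show "(\<integral>\<^sup>+x. ennreal (indicator \<Omega> x * (w x)\<^sup>2) \<partial>lborel)
        \<le> ennreal ((\<Sum>z\<in>Z. C z) + 1) * I\<^sup>2" .
  qed
qed

definition sobolev_constant :: "(real^2) set \<Rightarrow> real \<Rightarrow> bool" where
  "sobolev_constant \<Omega> K \<longleftrightarrow> K \<ge> 0 \<and>
    (\<forall>w Gw. (\<forall>x\<in>\<Omega>. (w has_derivative (\<lambda>h. Gw x \<bullet> h)) (at x)) \<longrightarrow>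
      continuous_on (closure \<Omega>) w \<longrightarrow> continuous_on (closure \<Omega>) Gw \<longrightarrow>
      integral \<Omega> (\<lambda>x. (w x)\<^sup>2) \<le> K * (integral \<Omega> (\<lambda>x. norm (Gw x) + \<bar>w x\<bar>))\<^sup>2)"

lemma sobolev_constantD:
  assumes "sobolev_constant \<Omega> K" "\<And>x. x \<in> \<Omega> \<Longrightarrow> (w has_derivative (\<lambda>h. Gw x \<bullet> h)) (at x)"
    "continuous_on (closure \<Omega>) w" "continuous_on (closure \<Omega>) Gw"
  shows "integral \<Omega> (\<lambda>x. (w x)\<^sup>2) \<le> K * (integral \<Omega> (\<lambda>x. norm (Gw x) + \<bar>w x\<bar>))\<^sup>2"
  using assms unfolding sobolev_constant_def by blast

lemma sobolev_constant_nonneg: "sobolev_constant \<Omega> K \<Longrightarrow> K \<ge> 0"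
  by (simp add: sobolev_constant_def)

lemma sobolev_inequality:
  fixes \<Omega> :: "(real^2) set"
  assumes "bounded \<Omega>" "open \<Omega>" "smooth_boundary \<Omega>"
  obtains K where "K > 0" "sobolev_constant \<Omega> K"
proof -
  obtain K where "K > 0" and K: "\<And>w Gw. (\<And>x. x \<in> \<Omega> \<Longrightarrow> (w has_derivative (\<lambda>h. Gw x \<bullet> h)) (at x)) \<Longrightarrow>
      continuous_on \<Omega> Gw \<Longrightarrow> (\<integral>\<^sup>+x. ennreal (indicator \<Omega> x * (w x)\<^sup>2) \<partial>lborel)
        \<le> ennreal K * (\<integral>\<^sup>+x. ennreal (indicator \<Omega> x * (norm (Gw x) + \<bar>w x\<bar>)) \<partial>lborel)\<^sup>2"
    using sobolev_inequality_nn[OF assms] by blast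
  have "integral \<Omega> (\<lambda>x. (w x)\<^sup>2) \<le> K * (integral \<Omega> (\<lambda>x. norm (Gw x) + \<bar>w x\<bar>))\<^sup>2"
    if der: "\<forall>x\<in>\<Omega>. (w has_derivative (\<lambda>h. Gw x \<bullet> h)) (at x)"
      and w: "continuous_on (closure \<Omega>) w" and Gw: "continuous_on (closure \<Omega>) Gw"
    for w :: "real^2 \<Rightarrow> real" and Gw
  proof -
    have "continuous_on \<Omega> Gw"
      using Gw closure_subset by (rule continuous_on_subset)
    have "(\<integral>\<^sup>+x. ennreal (indicator \<Omega> x * (w x)\<^sup>2) \<partial>lborel) = ennreal (integral \<Omega> (\<lambda>x. (w x)\<^sup>2))"
      "(\<integral>\<^sup>+x. ennreal (indicator \<Omega> x * (norm (Gw x) + \<bar>w x\<bar>)) \<partial>lborel)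
        = ennreal (integral \<Omega> (\<lambda>x. norm (Gw x) + \<bar>w x\<bar>))"
      using assms(1,2) w Gw by (auto intro!: nn_integral_indicator_eq_integral continuous_intros)
    moreover have "0 \<le> integral \<Omega> (\<lambda>x. norm (Gw x) + \<bar>w x\<bar>)"
      by (simp add: integral_nonneg_of_nonneg)
    ultimately have "ennreal (integral \<Omega> (\<lambda>x. (w x)\<^sup>2))
        \<le> ennreal (K * (integral \<Omega> (\<lambda>x. norm (Gw x) + \<bar>w x\<bar>))\<^sup>2)"
      using K[OF bspec[OF der] \<open>continuous_on \<Omega> Gw\<close>] \<open>K > 0\<close>
      by (simp add: ennreal_power ennreal_mult del: ennreal_mult')
    then show ?thesis
      using \<open>K > 0\<close> by (simp add: ennreal_le_iff)
  qed
  with \<open>K > 0\<close> show ?thesis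
    using that by (simp add: sobolev_constant_def)
qed

section \<open>The interpolation inequality\<close>

lemma has_derivative_grad:
  fixes f :: "real^2 \<Rightarrow> real"
  assumes "f differentiable (at x)"
  shows "(f has_derivative (\<lambda>h. grad f x \<bullet> h)) (at x)"
proof -
  let ?D = "frechet_derivative f (at x)"
  have D: "(f has_derivative ?D) (at x)"
    using assms frechet_derivative_works by blast
  have "?D h = grad f x \<bullet> h" for h
  proof -
    have "?D h = ?D (h$1 *\<^sub>R axis 1 1 + h$2 *\<^sub>R axis 2 1)"
      using real2_eq_axis_sum[of h] by simp
    also have "\<dots> = h$1 * ?D (axis 1 1) + h$2 * ?D (axis 2 1)"
      using has_derivative_linear[OF D] by (simp add: linear_add linear_scale)
    finally show ?thesis
      by (simp add: grad_def inner_vec_def sum_2 mult.commute)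
  qed
  then have "?D = (\<lambda>h. grad f x \<bullet> h)"
    by (rule ext)
  then show ?thesis
    using D by simp
qed

lemma C1_closureE:
  assumes "C1_closure \<Omega> f"
  obtains g where "continuous_on (closure \<Omega>) f" "continuous_on (closure \<Omega>) g"
    "\<And>x. x \<in> \<Omega> \<Longrightarrow> g x = grad f x" "\<And>x. x \<in> \<Omega> \<Longrightarrow> (f has_derivative (\<lambda>h. g x \<bullet> h)) (at x)"
  using assms has_derivative_grad unfolding C1_closure_def by metis

lemma has_derivative_powr_mult_sqrt:
  fixes u v :: "'a::real_inner \<Rightarrow> real"
  assumes "u x > 0" "v x > 0"
    and u: "(u has_derivative (\<lambda>h. gu \<bullet> h)) (at x)" and v: "(v has_derivative (\<lambda>h. gv \<bullet> h)) (at x)"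
  shows "((\<lambda>x. u x powr a * sqrt (v x)) has_derivative
     (\<lambda>h. ((a * u x powr (a - 1) * sqrt (v x)) *\<^sub>R gu + (u x powr a / (2 * sqrt (v x))) *\<^sub>R gv) \<bullet> h)) (at x)"
proof -
  have "((\<lambda>x. u x powr a) has_derivative (\<lambda>h. a * u x powr (a - 1) * (gu \<bullet> h))) (at x)"
    using has_derivative_compose[OF u has_real_derivative_powr[OF \<open>u x > 0\<close>, unfolded has_field_derivative_def]]
    by simp
  moreover have "(sqrt has_derivative (*) (inverse (sqrt (v x)) / 2)) (at (v x))"
    using DERIV_real_sqrt[OF \<open>v x > 0\<close>] by (simp add: has_field_derivative_def)
  from has_derivative_compose[OF v this]
  have "((\<lambda>x. sqrt (v x)) has_derivative (\<lambda>h. inverse (sqrt (v x)) / 2 * (gv \<bullet> h))) (at x)" .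
  ultimately show ?thesis
    by (rule has_derivative_eq_rhs[OF has_derivative_mult]) (simp add: fun_eq_iff inner_add_left field_simps)
qed

lemma norm_grad_powr_mult_sqrt_le:
  fixes gu gv :: "'a::real_normed_vector"
  assumes "u > 0" "v > 0" "a \<ge> 0"
  shows "norm ((a * u powr (a - 1) * sqrt v) *\<^sub>R gu + (u powr a / (2 * sqrt v)) *\<^sub>R gv) + \<bar>u powr a * sqrt v\<bar>
    \<le> a * u powr (a - 1) * (sqrt v * norm gu) + u powr (a - 1 / 2) * (sqrt u * norm gv / (2 * sqrt v))
      + u powr (a - 1 / 2) * sqrt (u * v)"
proof -
  have "u powr a = u powr (a - 1 / 2) * sqrt u"
    using assms by (simp add: powr_half_sqrt[symmetric] powr_add[symmetric])
  then show ?thesis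
    using assms norm_triangle_ineq[of "(a * u powr (a - 1) * sqrt v) *\<^sub>R gu" "(u powr a / (2 * sqrt v)) *\<^sub>R gv"]
    by (simp add: abs_mult real_sqrt_mult field_simps)
qed

lemma Cauchy_Schwarz_integral:
  fixes f g :: "'a::euclidean_space \<Rightarrow> real"
  assumes "bounded \<Omega>" "open \<Omega>" "continuous_on (closure \<Omega>) f" "continuous_on (closure \<Omega>) g"
    and "\<And>x. x \<in> \<Omega> \<Longrightarrow> 0 \<le> f x" "\<And>x. x \<in> \<Omega> \<Longrightarrow> 0 \<le> g x"
  shows "(integral \<Omega> (\<lambda>x. f x * g x))\<^sup>2 \<le> integral \<Omega> (\<lambda>x. (f x)\<^sup>2) * integral \<Omega> (\<lambda>x. (g x)\<^sup>2)"
proof -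
  define F where "F x = ennreal (indicator \<Omega> x * f x)" for x
  define G where "G x = ennreal (indicator \<Omega> x * g x)" for x
  have cont: "continuous_on \<Omega> f" "continuous_on \<Omega> g"
    using assms(3,4) closure_subset continuous_on_subset by blast+
  have [measurable]: "F \<in> borel_measurable lborel" "G \<in> borel_measurable lborel"
    unfolding F_def G_def using assms(2)
    by (auto intro!: measurable_compose[OF _ measurable_ennreal]
        borel_measurable_continuous_on_indicator_mult cont)
  have e1: "(\<integral>\<^sup>+x. F x * G x \<partial>lborel) = (\<integral>\<^sup>+x. ennreal (indicator \<Omega> x * (f x * g x)) \<partial>lborel)"
    "(\<integral>\<^sup>+x. F x ^ 2 \<partial>lborel) = (\<integral>\<^sup>+x. ennreal (indicator \<Omega> x * (f x)\<^sup>2) \<partial>lborel)"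
    "(\<integral>\<^sup>+x. G x ^ 2 \<partial>lborel) = (\<integral>\<^sup>+x. ennreal (indicator \<Omega> x * (g x)\<^sup>2) \<partial>lborel)"
    using assms(5,6)
    by (auto intro!: nn_integral_cong simp: F_def G_def indicator_def ennreal_mult[symmetric] ennreal_power)
  have e2: "(\<integral>\<^sup>+x. ennreal (indicator \<Omega> x * (f x * g x)) \<partial>lborel) = ennreal (integral \<Omega> (\<lambda>x. f x * g x))"
    "(\<integral>\<^sup>+x. ennreal (indicator \<Omega> x * (f x)\<^sup>2) \<partial>lborel) = ennreal (integral \<Omega> (\<lambda>x. (f x)\<^sup>2))"
    "(\<integral>\<^sup>+x. ennreal (indicator \<Omega> x * (g x)\<^sup>2) \<partial>lborel) = ennreal (integral \<Omega> (\<lambda>x. (g x)\<^sup>2))"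
    using assms by (auto intro!: nn_integral_indicator_eq_integral continuous_intros)
  have "(\<integral>\<^sup>+x. F x * G x \<partial>lborel)\<^sup>2 \<le> (\<integral>\<^sup>+x. F x ^ 2 \<partial>lborel) * (\<integral>\<^sup>+x. G x ^ 2 \<partial>lborel)"
    by (rule Cauchy_Schwarz_nn_integral) measurable
  then have "ennreal (integral \<Omega> (\<lambda>x. f x * g x)) ^ 2
      \<le> ennreal (integral \<Omega> (\<lambda>x. (f x)\<^sup>2)) * ennreal (integral \<Omega> (\<lambda>x. (g x)\<^sup>2))"
    unfolding e1 e2 .
  then show ?thesis
    using assms(5,6)
    by (simp add: ennreal_power ennreal_mult[symmetric] ennreal_le_iff integral_nonneg_of_nonneg
        del: ennreal_mult')
qed

lemma square_sum3_le: "(x + y + z)\<^sup>2 \<le> 3 * (x\<^sup>2 + y\<^sup>2 + z\<^sup>2)" for x y z :: real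
  using sum_squares_ge_zero[of "x - y" "y - z"] sum_squares_ge_zero[of "x - z" 0]
  by (simp add: power2_eq_square algebra_simps)

lemma integral_sum3_mult_square_le:
  fixes f g h f' g' h' :: "'a::euclidean_space \<Rightarrow> real"
  assumes \<Omega>: "bounded \<Omega>" "open \<Omega>"
    and cont: "continuous_on (closure \<Omega>) f" "continuous_on (closure \<Omega>) g" "continuous_on (closure \<Omega>) h"
      "continuous_on (closure \<Omega>) f'" "continuous_on (closure \<Omega>) g'" "continuous_on (closure \<Omega>) h'"
    and nonneg: "\<And>x. x \<in> \<Omega> \<Longrightarrow> 0 \<le> f x \<and> 0 \<le> g x \<and> 0 \<le> h x \<and> 0 \<le> f' x \<and> 0 \<le> g' x \<and> 0 \<le> h' x"
  shows "(integral \<Omega> (\<lambda>x. f x * f' x + g x * g' x + h x * h' x))\<^sup>2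
    \<le> 3 * (integral \<Omega> (\<lambda>x. (f x)\<^sup>2) * integral \<Omega> (\<lambda>x. (f' x)\<^sup>2)
         + integral \<Omega> (\<lambda>x. (g x)\<^sup>2) * integral \<Omega> (\<lambda>x. (g' x)\<^sup>2)
         + integral \<Omega> (\<lambda>x. (h x)\<^sup>2) * integral \<Omega> (\<lambda>x. (h' x)\<^sup>2))"
proof -
  have "(\<lambda>x. f x * f' x) integrable_on \<Omega>" "(\<lambda>x. g x * g' x) integrable_on \<Omega>"
    "(\<lambda>x. h x * h' x) integrable_on \<Omega>"
    using \<Omega> cont by (auto intro!: continuous_on_closure_integrable_on continuous_intros)
  then have "integral \<Omega> (\<lambda>x. f x * f' x + g x * g' x + h x * h' x)
      = integral \<Omega> (\<lambda>x. f x * f' x) + integral \<Omega> (\<lambda>x. g x * g' x) + integral \<Omega> (\<lambda>x. h x * h' x)"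
    by (simp add: integral_add integrable_add)
  then have "(integral \<Omega> (\<lambda>x. f x * f' x + g x * g' x + h x * h' x))\<^sup>2
      \<le> 3 * ((integral \<Omega> (\<lambda>x. f x * f' x))\<^sup>2 + (integral \<Omega> (\<lambda>x. g x * g' x))\<^sup>2
        + (integral \<Omega> (\<lambda>x. h x * h' x))\<^sup>2)"
    by (simp only: square_sum3_le)
  also have "\<dots> \<le> 3 * (integral \<Omega> (\<lambda>x. (f x)\<^sup>2) * integral \<Omega> (\<lambda>x. (f' x)\<^sup>2)
         + integral \<Omega> (\<lambda>x. (g x)\<^sup>2) * integral \<Omega> (\<lambda>x. (g' x)\<^sup>2)
         + integral \<Omega> (\<lambda>x. (h x)\<^sup>2) * integral \<Omega> (\<lambda>x. (h' x)\<^sup>2))"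
    using nonneg by (intro mult_left_mono add_mono Cauchy_Schwarz_integral[OF \<Omega>] cont) auto
  finally show ?thesis .
qed

lemma sobolev_powr_mult_sqrt:
  fixes u v :: "real^2 \<Rightarrow> real" and gu gv :: "real^2 \<Rightarrow> real^2"
  assumes \<Omega>: "bounded \<Omega>" "open \<Omega>" and K: "sobolev_constant \<Omega> K" and "a \<ge> 0"
    and cont: "continuous_on (closure \<Omega>) u" "continuous_on (closure \<Omega>) v"
      "continuous_on (closure \<Omega>) gu" "continuous_on (closure \<Omega>) gv"
    and der: "\<And>x. x \<in> \<Omega> \<Longrightarrow> (u has_derivative (\<lambda>h. gu x \<bullet> h)) (at x)"
      "\<And>x. x \<in> \<Omega> \<Longrightarrow> (v has_derivative (\<lambda>h. gv x \<bullet> h)) (at x)"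
    and pos: "\<And>x. x \<in> closure \<Omega> \<Longrightarrow> 0 < u x \<and> 0 < v x"
  shows "integral \<Omega> (\<lambda>x. (u x powr a * sqrt (v x))\<^sup>2)
    \<le> 3 * K * (integral \<Omega> (\<lambda>x. (a * u x powr (a - 1))\<^sup>2) * integral \<Omega> (\<lambda>x. (sqrt (v x) * norm (gu x))\<^sup>2)
      + integral \<Omega> (\<lambda>x. (u x powr (a - 1 / 2))\<^sup>2)
        * integral \<Omega> (\<lambda>x. (sqrt (u x) * norm (gv x) / (2 * sqrt (v x)))\<^sup>2)
      + integral \<Omega> (\<lambda>x. (u x powr (a - 1 / 2))\<^sup>2) * integral \<Omega> (\<lambda>x. (sqrt (u x * v x))\<^sup>2))"
proof -
  define w where "w x = u x powr a * sqrt (v x)" for x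
  define Gw where "Gw x = (a * u x powr (a - 1) * sqrt (v x)) *\<^sub>R gu x + (u x powr a / (2 * sqrt (v x))) *\<^sub>R gv x"
    for x
  define R where "R x = a * u x powr (a - 1) * (sqrt (v x) * norm (gu x))
        + u x powr (a - 1 / 2) * (sqrt (u x) * norm (gv x) / (2 * sqrt (v x)))
        + u x powr (a - 1 / 2) * sqrt (u x * v x)" for x
  have pos\<Omega>: "0 < u x" "0 < v x" if "x \<in> \<Omega>" for x
    using pos closure_subset that by blast+
  have nz: "\<forall>x\<in>closure \<Omega>. u x \<noteq> 0" "\<forall>x\<in>closure \<Omega>. 2 * sqrt (v x) \<noteq> 0"
    using pos by fastforce+
  have cont_w: "continuous_on (closure \<Omega>) w" "continuous_on (closure \<Omega>) Gw" "continuous_on (closure \<Omega>) R"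
    unfolding w_def Gw_def R_def using nz by (auto intro!: continuous_intros cont)
  have "integral \<Omega> (\<lambda>x. (w x)\<^sup>2) \<le> K * (integral \<Omega> (\<lambda>x. norm (Gw x) + \<bar>w x\<bar>))\<^sup>2"
    using pos\<Omega>
    by (intro sobolev_constantD[OF K] cont_w) (auto simp: w_def Gw_def intro!: has_derivative_powr_mult_sqrt der)
  also have "\<dots> \<le> K * (integral \<Omega> R)\<^sup>2"
  proof -
    have "norm (Gw x) + \<bar>w x\<bar> \<le> R x" if "x \<in> \<Omega>" for x
      unfolding Gw_def w_def R_def
      by (rule norm_grad_powr_mult_sqrt_le) (use pos\<Omega>[OF that] \<open>a \<ge> 0\<close> in auto)
    then have "integral \<Omega> (\<lambda>x. norm (Gw x) + \<bar>w x\<bar>) \<le> integral \<Omega> R"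
      using \<Omega> cont_w
      by (intro integral_le continuous_on_closure_integrable_on) (auto intro!: continuous_intros)
    then show ?thesis
      using sobolev_constant_nonneg[OF K]
      by (intro mult_left_mono power_mono integral_nonneg_of_nonneg) auto
  qed
  also have "\<dots> \<le> K * (3 * (integral \<Omega> (\<lambda>x. (a * u x powr (a - 1))\<^sup>2)
        * integral \<Omega> (\<lambda>x. (sqrt (v x) * norm (gu x))\<^sup>2)
      + integral \<Omega> (\<lambda>x. (u x powr (a - 1 / 2))\<^sup>2)
        * integral \<Omega> (\<lambda>x. (sqrt (u x) * norm (gv x) / (2 * sqrt (v x)))\<^sup>2)
      + integral \<Omega> (\<lambda>x. (u x powr (a - 1 / 2))\<^sup>2) * integral \<Omega> (\<lambda>x. (sqrt (u x * v x))\<^sup>2)))"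
    unfolding R_def using sobolev_constant_nonneg[OF K] pos\<Omega> nz \<open>a \<ge> 0\<close>
    by (intro mult_left_mono integral_sum3_mult_square_le[OF \<Omega>, where f = "\<lambda>x. a * u x powr (a - 1)"
          and g = "\<lambda>x. u x powr (a - 1 / 2)" and h = "\<lambda>x. u x powr (a - 1 / 2)"])
      (auto simp: less_imp_le intro!: continuous_intros cont mult_nonneg_nonneg divide_nonneg_nonneg)
  finally show ?thesis
    unfolding w_def by (simp only: ac_simps)
qed

lemma powr_square: "(u powr b)\<^sup>2 = u powr (2 * b)" for u b :: real
  by (simp add: power2_eq_square flip: powr_add)

lemma powr_mult_sqrt_square:
  fixes u v :: real
  assumes "0 \<le> v"
  shows "(u powr a * sqrt v)\<^sup>2 = u powr (2 * a) * v"
  using assms by (simp add: power_mult_distrib powr_square)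

lemma interpolation_estimate:
  fixes \<phi> \<psi> :: "real^2 \<Rightarrow> real"
  assumes \<Omega>: "bounded \<Omega>" "open \<Omega>" and "p \<ge> 1" and K: "sobolev_constant \<Omega> K"
    and \<phi>: "C1_closure \<Omega> \<phi>" and \<psi>: "C1_closure \<Omega> \<psi>"
    and pos: "\<And>x. x \<in> closure \<Omega> \<Longrightarrow> 0 < \<phi> x \<and> 0 < \<psi> x"
  shows "integral \<Omega> (\<lambda>x. \<phi> x powr (p + 1) * \<psi> x)
    \<le> 3 * K * (((p + 1) / 2)\<^sup>2 * integral \<Omega> (\<lambda>x. \<phi> x powr (p - 1))
                  * integral \<Omega> (\<lambda>x. \<psi> x * (norm (grad \<phi> x))\<^sup>2)
        + integral \<Omega> (\<lambda>x. \<phi> x powr p) * integral \<Omega> (\<lambda>x. \<phi> x / \<psi> x * (norm (grad \<psi> x))\<^sup>2) / 4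
        + integral \<Omega> (\<lambda>x. \<phi> x powr p) * integral \<Omega> (\<lambda>x. \<phi> x * \<psi> x))"
proof -
  obtain gp where cont_\<phi>: "continuous_on (closure \<Omega>) \<phi>" "continuous_on (closure \<Omega>) gp"
    and gp: "\<And>x. x \<in> \<Omega> \<Longrightarrow> gp x = grad \<phi> x" "\<And>x. x \<in> \<Omega> \<Longrightarrow> (\<phi> has_derivative (\<lambda>h. gp x \<bullet> h)) (at x)"
    using C1_closureE[OF \<phi>] by blast
  obtain gq where cont_\<psi>: "continuous_on (closure \<Omega>) \<psi>" "continuous_on (closure \<Omega>) gq"
    and gq: "\<And>x. x \<in> \<Omega> \<Longrightarrow> gq x = grad \<psi> x" "\<And>x. x \<in> \<Omega> \<Longrightarrow> (\<psi> has_derivative (\<lambda>h. gq x \<bullet> h)) (at x)"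
    using C1_closureE[OF \<psi>] by blast
  define a where "a = (p + 1) / 2"
  then have "2 * a = p + 1" "a \<ge> 0"
    using \<open>p \<ge> 1\<close> by simp_all
  have pos\<Omega>: "0 < \<phi> x" "0 < \<psi> x" if "x \<in> \<Omega>" for x
    using pos closure_subset that by blast+
  have "integral \<Omega> (\<lambda>x. \<phi> x powr (p + 1) * \<psi> x) = integral \<Omega> (\<lambda>x. (\<phi> x powr a * sqrt (\<psi> x))\<^sup>2)"
    using pos\<Omega> by (intro integral_cong) (simp add: powr_mult_sqrt_square less_imp_le \<open>2 * a = p + 1\<close>)
  also have "\<dots> \<le> 3 * K * (integral \<Omega> (\<lambda>x. (a * \<phi> x powr (a - 1))\<^sup>2)
        * integral \<Omega> (\<lambda>x. (sqrt (\<psi> x) * norm (gp x))\<^sup>2)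
      + integral \<Omega> (\<lambda>x. (\<phi> x powr (a - 1 / 2))\<^sup>2)
        * integral \<Omega> (\<lambda>x. (sqrt (\<phi> x) * norm (gq x) / (2 * sqrt (\<psi> x)))\<^sup>2)
      + integral \<Omega> (\<lambda>x. (\<phi> x powr (a - 1 / 2))\<^sup>2) * integral \<Omega> (\<lambda>x. (sqrt (\<phi> x * \<psi> x))\<^sup>2))"
    by (rule sobolev_powr_mult_sqrt[OF \<Omega> K \<open>a \<ge> 0\<close> cont_\<phi>(1) cont_\<psi>(1) cont_\<phi>(2) cont_\<psi>(2)
          gp(2) gq(2) pos])
  also have "\<dots> = 3 * K * (((p + 1) / 2)\<^sup>2 * integral \<Omega> (\<lambda>x. \<phi> x powr (p - 1))
                  * integral \<Omega> (\<lambda>x. \<psi> x * (norm (grad \<phi> x))\<^sup>2)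
        + integral \<Omega> (\<lambda>x. \<phi> x powr p) * integral \<Omega> (\<lambda>x. \<phi> x / \<psi> x * (norm (grad \<psi> x))\<^sup>2) / 4
        + integral \<Omega> (\<lambda>x. \<phi> x powr p) * integral \<Omega> (\<lambda>x. \<phi> x * \<psi> x))"
  proof -
    have "integral \<Omega> (\<lambda>x. (a * \<phi> x powr (a - 1))\<^sup>2) = a\<^sup>2 * integral \<Omega> (\<lambda>x. \<phi> x powr (p - 1))"
      "integral \<Omega> (\<lambda>x. (\<phi> x powr (a - 1 / 2))\<^sup>2) = integral \<Omega> (\<lambda>x. \<phi> x powr p)"
      using \<open>2 * a = p + 1\<close> by (simp_all add: power_mult_distrib powr_square right_diff_distrib)
    moreover have "integral \<Omega> (\<lambda>x. (sqrt (\<psi> x) * norm (gp x))\<^sup>2)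
        = integral \<Omega> (\<lambda>x. \<psi> x * (norm (grad \<phi> x))\<^sup>2)"
      "integral \<Omega> (\<lambda>x. (sqrt (\<phi> x) * norm (gq x) / (2 * sqrt (\<psi> x)))\<^sup>2)
        = integral \<Omega> (\<lambda>x. \<phi> x / \<psi> x * (norm (grad \<psi> x))\<^sup>2) / 4"
      "integral \<Omega> (\<lambda>x. (sqrt (\<phi> x * \<psi> x))\<^sup>2) = integral \<Omega> (\<lambda>x. \<phi> x * \<psi> x)"
      unfolding integral_divide[symmetric] using pos\<Omega> gp(1) gq(1)
      by (auto simp: power_mult_distrib power_divide less_imp_le intro!: integral_cong)
    ultimately show ?thesis
      unfolding a_def by (simp only:) (simp add: algebra_simps)
  qed
  finally show ?thesis .
qed

lemma powr_minus_one_le_one_plus_powr: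
  fixes x p :: real
  assumes "x > 0" "p \<ge> 1"
  shows "x powr (p - 1) \<le> 1 + x powr p"
proof (cases "x \<le> 1")
  case True
  then have "x powr (p - 1) \<le> 1"
    using assms by (intro powr_le1) auto
  then show ?thesis
    by (smt (verit) powr_ge_zero)
next
  case False
  then have "x powr (p - 1) \<le> x powr p"
    by (intro powr_mono) auto
  then show ?thesis
    by simp
qed

lemma interpolation_constant_le:
  fixes s m A B C P Q :: real
  assumes "0 \<le> s" "0 \<le> m" "0 \<le> A" "0 \<le> B" "0 \<le> C" "0 \<le> P" "Q \<le> m + P"
  shows "s * Q * A + P * B / 4 + P * C \<le> (s + 1) * (1 + m) * ((A + B + C) * P + A)"
proof -
  have "s * Q * A \<le> s * (m + P) * A"
    using assms by (intro mult_right_mono mult_left_mono) auto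
  moreover have "(s + 1) * (1 + m) * ((A + B + C) * P + A) - (s * (m + P) * A + P * B / 4 + P * C)
    = s * B * P + s * C * P + s * A + s * m * A * P + s * m * B * P + s * m * C * P + A * P
      + 3 / 4 * B * P + m * A * P + m * B * P + m * C * P + m * A + A"
    by (simp add: algebra_simps)
  moreover have "0 \<le> s * B * P + s * C * P + s * A + s * m * A * P + s * m * B * P + s * m * C * P + A * P
      + 3 / 4 * B * P + m * A * P + m * B * P + m * C * P + m * A + A"
    using assms by simp
  ultimately show ?thesis
    by linarith
qed

lemma integral_powr_minus_one_le:
  fixes f :: "real^2 \<Rightarrow> real"
  assumes "bounded \<Omega>" "open \<Omega>" "continuous_on (closure \<Omega>) f" "\<And>x. x \<in> closure \<Omega> \<Longrightarrow> 0 < f x"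
    and "p \<ge> 1"
  shows "integral \<Omega> (\<lambda>x. f x powr (p - 1)) \<le> integral \<Omega> (\<lambda>x. 1) + integral \<Omega> (\<lambda>x. f x powr p)"
proof -
  have nz: "\<forall>x\<in>closure \<Omega>. f x \<noteq> 0"
    using assms(4) by fastforce
  have "integral \<Omega> (\<lambda>x. f x powr (p - 1)) \<le> integral \<Omega> (\<lambda>x. 1 + f x powr p)"
    using assms closure_subset nz
    by (intro integral_le continuous_on_closure_integrable_on powr_minus_one_le_one_plus_powr)
      (auto intro!: continuous_intros)
  also have "\<dots> = integral \<Omega> (\<lambda>x. 1) + integral \<Omega> (\<lambda>x. f x powr p)"
    using assms nz by (intro integral_add continuous_on_closure_integrable_on) (auto intro!: continuous_intros)
  finally show ?thesis .
qed

lemma interpolation_inequality: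
  fixes \<phi> \<psi> :: "real^2 \<Rightarrow> real"
  assumes \<Omega>: "bounded \<Omega>" "open \<Omega>" and "p \<ge> 1" and K: "sobolev_constant \<Omega> K"
    and \<phi>: "C1_closure \<Omega> \<phi>" and \<psi>: "C1_closure \<Omega> \<psi>"
    and pos: "\<And>x. x \<in> closure \<Omega> \<Longrightarrow> 0 < \<phi> x \<and> 0 < \<psi> x"
  defines "c \<equiv> 3 * K * (((p + 1) / 2)\<^sup>2 + 1) * (1 + integral \<Omega> (\<lambda>x. 1))"
  shows "integral \<Omega> (\<lambda>x. \<phi> x powr (p + 1) * \<psi> x)
    \<le> c * (integral \<Omega> (\<lambda>x. \<psi> x * (norm (grad \<phi> x))\<^sup>2)
           + integral \<Omega> (\<lambda>x. \<phi> x / \<psi> x * (norm (grad \<psi> x))\<^sup>2)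
           + integral \<Omega> (\<lambda>x. \<phi> x * \<psi> x))
        * integral \<Omega> (\<lambda>x. \<phi> x powr p)
      + c * integral \<Omega> (\<lambda>x. \<psi> x * (norm (grad \<phi> x))\<^sup>2)"
proof -
  define A where "A = integral \<Omega> (\<lambda>x. \<psi> x * (norm (grad \<phi> x))\<^sup>2)"
  define B where "B = integral \<Omega> (\<lambda>x. \<phi> x / \<psi> x * (norm (grad \<psi> x))\<^sup>2)"
  define C where "C = integral \<Omega> (\<lambda>x. \<phi> x * \<psi> x)"
  define P where "P = integral \<Omega> (\<lambda>x. \<phi> x powr p)"
  define Q where "Q = integral \<Omega> (\<lambda>x. \<phi> x powr (p - 1))"
  define m where "m = integral \<Omega> (\<lambda>x. 1 :: real)"
  have pos\<Omega>: "0 < \<phi> x" "0 < \<psi> x" if "x \<in> \<Omega>" for x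
    using pos closure_subset that by blast+
  have "0 \<le> A" "0 \<le> B" "0 \<le> C" "0 \<le> P" "0 \<le> m"
    unfolding A_def B_def C_def P_def m_def using pos\<Omega>
    by (auto intro!: integral_nonneg_of_nonneg simp: less_imp_le)
  moreover have "Q \<le> m + P"
  proof -
    obtain gp where "continuous_on (closure \<Omega>) \<phi>"
      using C1_closureE[OF \<phi>] .
    then show ?thesis
      unfolding Q_def m_def P_def using pos \<open>p \<ge> 1\<close> by (intro integral_powr_minus_one_le \<Omega>) auto
  qed
  ultimately have "((p + 1) / 2)\<^sup>2 * Q * A + P * B / 4 + P * C
      \<le> (((p + 1) / 2)\<^sup>2 + 1) * (1 + m) * ((A + B + C) * P + A)"
    by (intro interpolation_constant_le) auto
  then have "3 * K * (((p + 1) / 2)\<^sup>2 * Q * A + P * B / 4 + P * C)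
      \<le> 3 * K * ((((p + 1) / 2)\<^sup>2 + 1) * (1 + m) * ((A + B + C) * P + A))"
    using sobolev_constant_nonneg[OF K] by (intro mult_left_mono) auto
  moreover have "integral \<Omega> (\<lambda>x. \<phi> x powr (p + 1) * \<psi> x)
      \<le> 3 * K * (((p + 1) / 2)\<^sup>2 * Q * A + P * B / 4 + P * C)"
    unfolding A_def B_def C_def P_def Q_def by (rule interpolation_estimate[OF \<Omega> \<open>p \<ge> 1\<close> K \<phi> \<psi> pos])
  ultimately show ?thesis
    unfolding c_def m_def A_def B_def C_def P_def by (simp add: algebra_simps)
qed

theorem lemma4p1:
  fixes \<Omega> :: "(real^2) set" and p :: real
  assumes "bounded \<Omega>" and "open \<Omega>" and "connected \<Omega>" and "\<Omega> \<noteq> {}"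
    and "smooth_boundary \<Omega>" and "p \<ge> 1"
  shows "\<exists>c>0. \<forall>\<phi> \<psi>. C1_closure \<Omega> \<phi> \<and> C1_closure \<Omega> \<psi> \<and>
            (\<forall>x\<in>closure \<Omega>. \<phi> x > 0 \<and> \<psi> x > 0) \<longrightarrow>
          integral \<Omega> (\<lambda>x. \<phi> x powr (p + 1) * \<psi> x)
            \<le> c * (integral \<Omega> (\<lambda>x. \<psi> x * (norm (grad \<phi> x))\<^sup>2)
                   + integral \<Omega> (\<lambda>x. \<phi> x / \<psi> x * (norm (grad \<psi> x))\<^sup>2)
                   + integral \<Omega> (\<lambda>x. \<phi> x * \<psi> x))
                * integral \<Omega> (\<lambda>x. \<phi> x powr p)
              + c * integral \<Omega> (\<lambda>x. \<psi> x * (norm (grad \<phi> x))\<^sup>2)"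
proof -
  obtain K where "K > 0" and K: "sobolev_constant \<Omega> K"
    using sobolev_inequality[OF assms(1,2,5)] by blast
  define c where "c = 3 * K * (((p + 1) / 2)\<^sup>2 + 1) * (1 + integral \<Omega> (\<lambda>x. 1))"
  have "integral \<Omega> (\<lambda>x. 1 :: real) \<ge> 0"
    by (simp add: integral_nonneg_of_nonneg)
  then have "c > 0"
    unfolding c_def using \<open>K > 0\<close> by (intro mult_pos_pos) (auto simp: add_nonneg_pos add_pos_nonneg)
  then show ?thesis
    using interpolation_inequality[OF assms(1,2,6) K] unfolding c_def by blast
qed

end
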